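(* Let $O_{(4,1)}(x,y,z,w)=x^4z^2w^2+y^4x^2w^2+z^4x^2y^2+w^4y^2z^2-4x^2y^2z^2w^2$, and let $F$ be a real form of degree $8$ in $x,y,z,w$ with $0\le F\le O_{(4,1)}$ pointwise on $\mathbb R^4$. Let $H$ be the part of $F$ consisting of its terms in the monomials $x^4z^2w^2$, $y^4x^2w^2$, $z^4x^2y^2$, $w^4y^2z^2$, $x^2y^2z^2w^2$, i.e. $H=a\,x^4z^2w^2+b\,y^4x^2w^2+c\,z^4x^2y^2+d\,w^4y^2z^2+e\,x^2y^2z^2w^2$ where $a,b,c,d,e$ are the corresponding coefficients of $F$. Then $H=a\,O_{(4,1)}$, with $0\le a\le1$. *)

theory Defs
  imports Complex_Main
begin

definition exps :: "nat \<Rightarrow> (nat \<times> nat \<times> nat \<times> nat) set" where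
  "exps d = {(i,j,k,l). i + j + k + l = d}"

text \<open>A real form of degree d in x,y,z,w, given by its coefficient function
  (only coefficients of exponent tuples in exps d are used).\<close>
definition form_eval :: "nat \<Rightarrow> (nat \<times> nat \<times> nat \<times> nat \<Rightarrow> real) \<Rightarrow> real \<Rightarrow> real \<Rightarrow> real \<Rightarrow> real \<Rightarrow> real" where
  "form_eval d c x y z w = (\<Sum>(i,j,k,l)\<in>exps d. c (i,j,k,l) * x^i * y^j * z^k * w^l)"

definition O41 :: "real \<Rightarrow> real \<Rightarrow> real \<Rightarrow> real \<Rightarrow> real" where
  "O41 x y z w = x^4*z^2*w^2 + y^4*x^2*w^2 + z^4*x^2*y^2 + w^4*y^2*z^2 - 4*x^2*y^2*z^2*w^2"

end

theory Submission
  imports Defs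
begin

text \<open>Averaging F over the sixteen sign changes of the variables keeps only its monomials with
  even exponents; substituting X = x^2 etc. turns this average into a quartic G with 0 \<le> G \<le> Q
  on the nonnegative orthant, where Q(x^2, y^2, z^2, w^2) = O41(x, y, z, w). Q vanishes where two
  coordinates vanish, which kills every monomial of G in at most two variables; where one coordinate
  vanishes, Q is a single monomial, which kills the monomials in three variables outside the support
  of Q. Finally Q attains its minimum 0 at (1,1,1,1), so G does too, and the vanishing of the
  gradient of G there forces G to be a multiple of Q.\<close>

lemma quadratic_between_0_and_id_imp_leading_zero:
  fixes p k :: real
  assumes "\<And>t. 0 < t \<Longrightarrow> 0 \<le> p * t^2 + k * t \<and> p * t^2 + k * t \<le> t"
  shows "p = 0"
proof (rule ccontr)
  assume "p \<noteq> 0"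
  define t where "t = (\<bar>k\<bar> + 2) / \<bar>p\<bar>"
  have "0 < t" using \<open>p \<noteq> 0\<close> by (simp add: t_def add_nonneg_pos)
  have "\<bar>p * t\<bar> = \<bar>k\<bar> + 2"
    using \<open>p \<noteq> 0\<close> by (simp add: t_def abs_mult)
  moreover have "p * t^2 + k * t = t * (p * t + k)"
    by (simp add: power2_eq_square algebra_simps)
  then have "0 \<le> p * t + k" "p * t + k \<le> 1"
    using assms[OF \<open>0 < t\<close>] \<open>0 < t\<close> by (simp_all add: zero_le_mult_iff)
  ultimately show False by linarith
qed

lemma nonneg_quadratic_root_at_one_imp_deriv_zero:
  fixes \<alpha> \<beta> \<gamma> :: real
  assumes "\<And>t. 0 < t \<Longrightarrow> 0 \<le> \<alpha> * t^2 + \<beta> * t + \<gamma>" and "\<alpha> + \<beta> + \<gamma> = 0"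
  shows "2 * \<alpha> + \<beta> = 0"
proof (rule DERIV_local_min)
  show "((\<lambda>t. \<alpha> * t^2 + \<beta> * t + \<gamma>) has_real_derivative 2 * \<alpha> + \<beta>) (at 1)"
    by (auto intro!: derivative_eq_intros)
  show "\<forall>t. \<bar>1 - t\<bar> < 1 \<longrightarrow> \<alpha> * 1^2 + \<beta> * 1 + \<gamma> \<le> \<alpha> * t^2 + \<beta> * t + \<gamma>"
    using assms by auto
qed simp

lemma finite_exps: "finite (exps d)"
proof -
  have "exps d \<subseteq> {..d} \<times> {..d} \<times> {..d} \<times> {..d}" by (auto simp: exps_def)
  then show ?thesis by (rule finite_subset) auto
qed

definition even_coeffs :: "(nat \<times> nat \<times> nat \<times> nat \<Rightarrow> 'a) \<Rightarrow> nat \<times> nat \<times> nat \<times> nat \<Rightarrow> 'a" where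
  "even_coeffs c = (\<lambda>(i,j,k,l). c (2*i, 2*j, 2*k, 2*l))"

lemma sum_signs_power: "(\<Sum>s\<in>{-1,1::real}. s ^ n) = (if even n then 2 else 0)"
  by simp

lemma sum_sign_vectors_monomial:
  "(\<Sum>s1\<in>{-1,1::real}. \<Sum>s2\<in>{-1,1::real}. \<Sum>s3\<in>{-1,1::real}. \<Sum>s4\<in>{-1,1::real}.
      s1^i * s2^j * s3^k * s4^l)
   = (if even i \<and> even j \<and> even k \<and> even l then 16 else 0)"
proof -
  have "(\<Sum>s1\<in>A. \<Sum>s2\<in>A. \<Sum>s3\<in>A. \<Sum>s4\<in>A. s1^i * s2^j * s3^k * s4^l)
      = (\<Sum>s\<in>A. s^i) * ((\<Sum>s\<in>A. s^j) * ((\<Sum>s\<in>A. s^k) * (\<Sum>s\<in>A. s^l)))" for A :: "real set"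
    unfolding sum_product by (simp only: sum_distrib_left mult.assoc)
  then show ?thesis by (simp only: sum_signs_power) auto
qed

lemma form_eval_sign_sum:
  "(\<Sum>s1\<in>{-1,1::real}. \<Sum>s2\<in>{-1,1::real}. \<Sum>s3\<in>{-1,1::real}. \<Sum>s4\<in>{-1,1::real}.
      form_eval (2*n) c (s1*x) (s2*y) (s3*z) (s4*w))
   = 16 * form_eval n (even_coeffs c) (x^2) (y^2) (z^2) (w^2)"
proof -
  \<comment> \<open>the abbreviation S keeps the simplifier from expanding the two-point sums prematurely\<close>
  define S where "S = {-1, 1::real}"
  define dbl where "dbl = (\<lambda>(i::nat,j::nat,k::nat,l::nat). (2*i,2*j,2*k,2*l))"
  define allev where "allev = (\<lambda>(i::nat,j::nat,k::nat,l::nat). even i \<and> even j \<and> even k \<and> even l)"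
  define T where "T = (\<lambda>(i,j,k,l). c (i,j,k,l) * x^i*y^j*z^k*w^l)"
  have "(\<Sum>s1\<in>S. \<Sum>s2\<in>S. \<Sum>s3\<in>S. \<Sum>s4\<in>S. form_eval (2*n) c (s1*x) (s2*y) (s3*z) (s4*w))
      = (\<Sum>v\<in>exps (2*n). T v * (if allev v then 16 else 0))"
  proof -
    have "form_eval (2*n) c (s1*x) (s2*y) (s3*z) (s4*w)
        = (\<Sum>v\<in>exps (2*n). T v * (case v of (i,j,k,l) \<Rightarrow> s1^i * s2^j * s3^k * s4^l))"
      for s1 s2 s3 s4 :: real
      unfolding form_eval_def T_def by (intro sum.cong) (auto simp: power_mult_distrib)
    moreover have "(\<Sum>s1\<in>S. \<Sum>s2\<in>S. \<Sum>s3\<in>S. \<Sum>s4\<in>S.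
        (case v of (i,j,k,l) \<Rightarrow> s1^i * s2^j * s3^k * s4^l)) = (if allev v then 16 else 0)" for v
      by (cases v) (simp only: S_def allev_def sum_sign_vectors_monomial prod.case)
    ultimately show ?thesis
      by (simp add: sum.swap[of _ "exps (2*n)"] sum_distrib_left[symmetric])
  qed
  also have "\<dots> = 16 * sum T {v \<in> exps (2*n). allev v}"
    by (simp add: sum.inter_filter[OF finite_exps] sum_distrib_left if_distrib mult.commute cong: if_cong)
  also have "{v \<in> exps (2*n). allev v} = dbl ` exps n"
  proof (intro equalityI subsetI)
    fix v assume "v \<in> {v \<in> exps (2*n). allev v}"
    then obtain i j k l where "v = (2*i, 2*j, 2*k, 2*l)" "2*i + 2*j + 2*k + 2*l = 2*n"
      by (auto simp: exps_def allev_def elim!: evenE)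
    then show "v \<in> dbl ` exps n"
      by (auto simp: exps_def dbl_def image_iff)
  qed (auto simp: exps_def dbl_def allev_def)
  also have "sum T (dbl ` exps n) = form_eval n (even_coeffs c) (x^2) (y^2) (z^2) (w^2)"
    by (subst sum.reindex) (auto simp: inj_on_def dbl_def T_def form_eval_def even_coeffs_def power_mult intro!: sum.cong)
  finally show ?thesis by (simp add: S_def)
qed

lemma exps_4: "exps 4 = {(4,0,0,0),(0,4,0,0),(0,0,4,0),(0,0,0,4),
 (3,1,0,0),(3,0,1,0),(3,0,0,1),(1,3,0,0),(0,3,1,0),(0,3,0,1),(1,0,3,0),(0,1,3,0),(0,0,3,1),(1,0,0,3),(0,1,0,3),(0,0,1,3),
 (2,2,0,0),(2,0,2,0),(2,0,0,2),(0,2,2,0),(0,2,0,2),(0,0,2,2),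
 (2,1,1,0),(1,2,1,0),(1,1,2,0),(0,2,1,1),(0,1,2,1),(0,1,1,2),(2,0,1,1),(1,0,2,1),(1,0,1,2),(2,1,0,1),(1,2,0,1),(1,1,0,2),
 (1,1,1,1)}"
proof (intro equalityI subsetI)
  fix v assume "v \<in> exps 4"
  then obtain i j k l where v: "v = (i,j,k,l)" and s: "i+j+k+l = 4" by (auto simp: exps_def)
  then have l: "l = 4 - i - j - k" by arith
  have "i=0 \<or> i=1 \<or> i=2 \<or> i=3 \<or> i=4" "j=0 \<or> j=1 \<or> j=2 \<or> j=3 \<or> j=4"
    "k=0 \<or> k=1 \<or> k=2 \<or> k=3 \<or> k=4" using s by arith+
  then show "v \<in> {(4,0,0,0),(0,4,0,0),(0,0,4,0),(0,0,0,4),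
 (3,1,0,0),(3,0,1,0),(3,0,0,1),(1,3,0,0),(0,3,1,0),(0,3,0,1),(1,0,3,0),(0,1,3,0),(0,0,3,1),(1,0,0,3),(0,1,0,3),(0,0,1,3),
 (2,2,0,0),(2,0,2,0),(2,0,0,2),(0,2,2,0),(0,2,0,2),(0,0,2,2),
 (2,1,1,0),(1,2,1,0),(1,1,2,0),(0,2,1,1),(0,1,2,1),(0,1,1,2),(2,0,1,1),(1,0,2,1),(1,0,1,2),(2,1,0,1),(1,2,0,1),(1,1,0,2),
 (1,1,1,1)}"
    using s unfolding v l by (elim disjE) simp_all
qed (auto simp: exps_def)

definition O41_sq :: "real \<Rightarrow> real \<Rightarrow> real \<Rightarrow> real \<Rightarrow> real" where
  "O41_sq X Y Z W = X^2*Z*W + Y^2*X*W + Z^2*X*Y + W^2*Y*Z - 4*X*Y*Z*W"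

lemma O41_eq_O41_sq: "O41 x y z w = O41_sq (x^2) (y^2) (z^2) (w^2)"
  by (simp add: O41_def O41_sq_def power_mult[symmetric] mult.commute)

definition between_zero_and_O41_sq :: "(real \<Rightarrow> real \<Rightarrow> real \<Rightarrow> real \<Rightarrow> real) \<Rightarrow> bool" where
  "between_zero_and_O41_sq q \<longleftrightarrow> (\<forall>X Y Z W. 0 \<le> X \<longrightarrow> 0 \<le> Y \<longrightarrow> 0 \<le> Z \<longrightarrow> 0 \<le> W \<longrightarrow>
      0 \<le> q X Y Z W \<and> q X Y Z W \<le> O41_sq X Y Z W)"

lemma between_zero_and_O41_sq_even_coeffs:
  assumes "\<And>x y z w. 0 \<le> form_eval 8 c x y z w"
      and "\<And>x y z w. form_eval 8 c x y z w \<le> O41 x y z w"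
  shows "between_zero_and_O41_sq (form_eval 4 (even_coeffs c))"
  unfolding between_zero_and_O41_sq_def
proof (intro allI impI)
  fix X Y Z W :: real
  assume "0 \<le> X" "0 \<le> Y" "0 \<le> Z" "0 \<le> W"
  then obtain x y z w where sq: "X = x^2" "Y = y^2" "Z = z^2" "W = w^2"
    by (metis real_sqrt_pow2)
  define S where "S = (\<Sum>s1\<in>{-1,1::real}. \<Sum>s2\<in>{-1,1::real}. \<Sum>s3\<in>{-1,1::real}. \<Sum>s4\<in>{-1,1::real}.
      form_eval 8 c (s1*x) (s2*y) (s3*z) (s4*w))"
  have "S = 16 * form_eval 4 (even_coeffs c) X Y Z W"
    unfolding S_def sq using form_eval_sign_sum[where n=4] by simp
  moreover have "0 \<le> S"
    unfolding S_def by (intro sum_nonneg assms(1))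
  moreover have "S \<le> (\<Sum>s1\<in>{-1,1::real}. \<Sum>s2\<in>{-1,1::real}. \<Sum>s3\<in>{-1,1::real}. \<Sum>s4\<in>{-1,1::real}.
      O41 (s1*x) (s2*y) (s3*z) (s4*w))"
    unfolding S_def by (intro sum_mono assms(2))
  moreover have "\<dots> = 16 * O41_sq X Y Z W"
    by (simp add: sq O41_eq_O41_sq power_mult_distrib)
  ultimately show "0 \<le> form_eval 4 (even_coeffs c) X Y Z W \<and> form_eval 4 (even_coeffs c) X Y Z W \<le> O41_sq X Y Z W"
    by linarith
qed

lemma between_zero_and_O41_sq_three_variable_monomials:
  assumes "between_zero_and_O41_sq (form_eval 4 d)"
  shows "form_eval 4 d X Y Z W =
      X*Y*Z * (d (2,1,1,0) * X + d (1,2,1,0) * Y + d (1,1,2,0) * Z)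
    + X*Y*W * (d (2,1,0,1) * X + d (1,2,0,1) * Y + d (1,1,0,2) * W)
    + X*Z*W * (d (2,0,1,1) * X + d (1,0,2,1) * Z + d (1,0,1,2) * W)
    + Y*Z*W * (d (0,2,1,1) * Y + d (0,1,2,1) * Z + d (0,1,1,2) * W)
    + d (1,1,1,1) * X*Y*Z*W"
proof -
  have vanish: "form_eval 4 d X Y Z W = 0"
    if "0 \<le> X" "0 \<le> Y" "0 \<le> Z" "0 \<le> W" "O41_sq X Y Z W = 0" for X Y Z W
    using assms that unfolding between_zero_and_O41_sq_def by (metis order_antisym)
  \<comment> \<open>five points on each coordinate plane determine a binary quartic\<close>
  have "\<forall>(X,Y,Z,W) \<in> {(1,0,0,0),(0,1,0,0),(0,0,1,0),(0,0,0,1),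
      (1,1,0,0),(1,2,0,0),(2,1,0,0),(1,0,1,0),(1,0,2,0),(2,0,1,0),(1,0,0,1),(1,0,0,2),(2,0,0,1),
      (0,1,1,0),(0,1,2,0),(0,2,1,0),(0,1,0,1),(0,1,0,2),(0,2,0,1),(0,0,1,1),(0,0,1,2),(0,0,2,1)}.
      form_eval 4 d X Y Z W = 0"
    by (auto intro!: vanish simp: O41_sq_def)
  then have "d (4,0,0,0) = 0 \<and> d (0,4,0,0) = 0 \<and> d (0,0,4,0) = 0 \<and> d (0,0,0,4) = 0
    \<and> d (3,1,0,0) = 0 \<and> d (2,2,0,0) = 0 \<and> d (1,3,0,0) = 0
    \<and> d (3,0,1,0) = 0 \<and> d (2,0,2,0) = 0 \<and> d (1,0,3,0) = 0
    \<and> d (3,0,0,1) = 0 \<and> d (2,0,0,2) = 0 \<and> d (1,0,0,3) = 0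
    \<and> d (0,3,1,0) = 0 \<and> d (0,2,2,0) = 0 \<and> d (0,1,3,0) = 0
    \<and> d (0,3,0,1) = 0 \<and> d (0,2,0,2) = 0 \<and> d (0,1,0,3) = 0
    \<and> d (0,0,3,1) = 0 \<and> d (0,0,2,2) = 0 \<and> d (0,0,1,3) = 0"
    by (simp add: form_eval_def exps_4)
  then show ?thesis
    by (simp add: form_eval_def exps_4 power_numeral_reduce algebra_simps)
qed

lemma between_zero_and_O41_sq_support:
  assumes "between_zero_and_O41_sq (form_eval 4 d)"
  shows "form_eval 4 d X Y Z W = d (2,0,1,1) * X^2*Z*W + d (1,2,0,1) * Y^2*X*W
    + d (1,1,2,0) * Z^2*X*Y + d (0,1,1,2) * W^2*Y*Z + d (1,1,1,1) * X*Y*Z*W"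
proof -
  note face_simps = between_zero_and_O41_sq_three_variable_monomials[OF assms]
    O41_sq_def algebra_simps power2_eq_square
  have q: "0 \<le> form_eval 4 d X Y Z W \<and> form_eval 4 d X Y Z W \<le> O41_sq X Y Z W"
    if "0 \<le> X" "0 \<le> Y" "0 \<le> Z" "0 \<le> W" for X Y Z W
    using assms that unfolding between_zero_and_O41_sq_def by simp
  \<comment> \<open>on the face W = 0 the bounds read 0 \<le> XYZ (pX + qY + rZ) \<le> XYZ Z; take (t,1,1,0)\<close>
  have "d (2,1,1,0) = 0"
    by (rule quadratic_between_0_and_id_imp_leading_zero[where k = "d (1,2,1,0) + d (1,1,2,0)"])
      (use q[of t 1 1 0 for t] in \<open>auto simp: face_simps\<close>)
  moreover have "d (1,2,1,0) = 0"
    by (rule quadratic_between_0_and_id_imp_leading_zero[where k = "d (2,1,1,0) + d (1,1,2,0)"])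
      (use q[of 1 t 1 0 for t] in \<open>auto simp: face_simps\<close>)
  moreover have "d (2,1,0,1) = 0"
    by (rule quadratic_between_0_and_id_imp_leading_zero[where k = "d (1,2,0,1) + d (1,1,0,2)"])
      (use q[of t 1 0 1 for t] in \<open>auto simp: face_simps\<close>)
  moreover have "d (1,1,0,2) = 0"
    by (rule quadratic_between_0_and_id_imp_leading_zero[where k = "d (2,1,0,1) + d (1,2,0,1)"])
      (use q[of 1 1 0 t for t] in \<open>auto simp: face_simps\<close>)
  moreover have "d (1,0,2,1) = 0"
    by (rule quadratic_between_0_and_id_imp_leading_zero[where k = "d (2,0,1,1) + d (1,0,1,2)"])
      (use q[of 1 0 t 1 for t] in \<open>auto simp: face_simps\<close>)
  moreover have "d (1,0,1,2) = 0"
    by (rule quadratic_between_0_and_id_imp_leading_zero[where k = "d (2,0,1,1) + d (1,0,2,1)"])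
      (use q[of 1 0 1 t for t] in \<open>auto simp: face_simps\<close>)
  moreover have "d (0,2,1,1) = 0"
    by (rule quadratic_between_0_and_id_imp_leading_zero[where k = "d (0,1,2,1) + d (0,1,1,2)"])
      (use q[of 0 t 1 1 for t] in \<open>auto simp: face_simps\<close>)
  moreover have "d (0,1,2,1) = 0"
    by (rule quadratic_between_0_and_id_imp_leading_zero[where k = "d (0,2,1,1) + d (0,1,1,2)"])
      (use q[of 0 1 t 1 for t] in \<open>auto simp: face_simps\<close>)
  ultimately show ?thesis
    by (simp add: face_simps)
qed

lemma between_zero_and_O41_sq_support_coeffs:
  fixes a b c d e :: real
  assumes "between_zero_and_O41_sq (\<lambda>X Y Z W. a*X^2*Z*W + b*Y^2*X*W + c*Z^2*X*Y + d*W^2*Y*Z + e*X*Y*Z*W)"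
  shows "b = a \<and> c = a \<and> d = a \<and> e = -4*a \<and> 0 \<le> a \<and> a \<le> 1"
proof -
  have q: "0 \<le> a*X^2*Z*W + b*Y^2*X*W + c*Z^2*X*Y + d*W^2*Y*Z + e*X*Y*Z*W"
    "a*X^2*Z*W + b*Y^2*X*W + c*Z^2*X*Y + d*W^2*Y*Z + e*X*Y*Z*W \<le> O41_sq X Y Z W"
    if "0 \<le> X" "0 \<le> Y" "0 \<le> Z" "0 \<le> W" for X Y Z W
    using assms that unfolding between_zero_and_O41_sq_def by blast+
  have "a + b + c + d + e = 0"
    using q[of 1 1 1 1] by (simp add: O41_sq_def)
  moreover have "0 \<le> a" "a \<le> 1"
    using q[of 1 0 1 1] by (simp_all add: O41_sq_def)
  \<comment> \<open>each restriction to a line through the minimum (1,1,1,1) has a critical point there\<close>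
  moreover have "2*a + (b + c + e) = 0"
    by (rule nonneg_quadratic_root_at_one_imp_deriv_zero[where \<gamma>=d])
      (use q(1)[of t 1 1 1 for t] calculation in \<open>auto simp: algebra_simps\<close>)
  moreover have "2*b + (c + d + e) = 0"
    by (rule nonneg_quadratic_root_at_one_imp_deriv_zero[where \<gamma>=a])
      (use q(1)[of 1 t 1 1 for t] calculation in \<open>auto simp: algebra_simps\<close>)
  moreover have "2*c + (a + d + e) = 0"
    by (rule nonneg_quadratic_root_at_one_imp_deriv_zero[where \<gamma>=b])
      (use q(1)[of 1 1 t 1 for t] calculation in \<open>auto simp: algebra_simps\<close>)
  moreover have "2*d + (a + b + e) = 0"
    by (rule nonneg_quadratic_root_at_one_imp_deriv_zero[where \<gamma>=c])
      (use q(1)[of 1 1 1 t for t] calculation in \<open>auto simp: algebra_simps\<close>)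
  ultimately show ?thesis by linarith
qed

theorem lemma2:
  fixes c :: "nat \<times> nat \<times> nat \<times> nat \<Rightarrow> real"
  assumes "\<And>x y z w. 0 \<le> form_eval 8 c x y z w"
      and "\<And>x y z w. form_eval 8 c x y z w \<le> O41 x y z w"
  shows "(\<forall>x y z w.
            c (4,0,2,2) * x^4*z^2*w^2 + c (2,4,0,2) * y^4*x^2*w^2
          + c (2,2,4,0) * z^4*x^2*y^2 + c (0,2,2,4) * w^4*y^2*z^2
          + c (2,2,2,2) * x^2*y^2*z^2*w^2
          = c (4,0,2,2) * O41 x y z w)
         \<and> 0 \<le> c (4,0,2,2) \<and> c (4,0,2,2) \<le> 1"
proof -
  have even_part: "between_zero_and_O41_sq (form_eval 4 (even_coeffs c))"
    using assms by (rule between_zero_and_O41_sq_even_coeffs)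
  have "form_eval 4 (even_coeffs c) = (\<lambda>X Y Z W. c (4,0,2,2) * X^2*Z*W + c (2,4,0,2) * Y^2*X*W
      + c (2,2,4,0) * Z^2*X*Y + c (0,2,2,4) * W^2*Y*Z + c (2,2,2,2) * X*Y*Z*W)"
    unfolding between_zero_and_O41_sq_support[OF even_part] by (simp add: even_coeffs_def)
  with even_part have "between_zero_and_O41_sq (\<lambda>X Y Z W. c (4,0,2,2) * X^2*Z*W + c (2,4,0,2) * Y^2*X*W
      + c (2,2,4,0) * Z^2*X*Y + c (0,2,2,4) * W^2*Y*Z + c (2,2,2,2) * X*Y*Z*W)"
    by simp
  then have "c (2,4,0,2) = c (4,0,2,2) \<and> c (2,2,4,0) = c (4,0,2,2) \<and> c (0,2,2,4) = c (4,0,2,2)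
      \<and> c (2,2,2,2) = -4 * c (4,0,2,2) \<and> 0 \<le> c (4,0,2,2) \<and> c (4,0,2,2) \<le> 1"
    by (rule between_zero_and_O41_sq_support_coeffs)
  then show ?thesis
    by (simp add: O41_def algebra_simps)
qed

end
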